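(* Let $G=(V,E)$ be a finite graph and let $M_1,M_2$ be perfect matchings of its dart graph $\mathcal D(G)$. Then the set $(M_1\triangle M_2)\cap E^E_{\mathcal D}$, viewed as a subset of $E$, is a closed curve on $G$.
   Context: A closed curve on $G$ is a subset $C\subseteq E$ such that every vertex of $G$ is incident with an even number of edges of $C$. The dart graph $\mathcal D(G)$ has vertex set $V_{\mathcal D}(G)=\{(v,e)\in V\times E: v\text{ incident with }e\}$, two distinct darts $(v,e),(v',e')$ being adjacent iff $v=v'$ or $e=e'$. $E^E_{\mathcal D}$ is the set of edges of $\mathcal D(G)$ of the form $\{(x,e),(y,e)\}$; it is identified with $E$ via $e\leftrightarrow\{(x,e),(y,e)\}$. A perfect matching of a graph is a set of its edges such that each vertex is incident with exactly one of them. *)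

theory Defs
  imports Main
begin

definition finite_graph :: "'v set \<Rightarrow> 'e set \<Rightarrow> ('v \<Rightarrow> 'e \<Rightarrow> bool) \<Rightarrow> bool" where
  "finite_graph V E inc \<longleftrightarrow> finite V \<and> finite E \<and>
     (\<forall>e\<in>E. card {v\<in>V. inc v e} = 2)"

definition closed_curve :: "'v set \<Rightarrow> 'e set \<Rightarrow> ('v \<Rightarrow> 'e \<Rightarrow> bool) \<Rightarrow> 'e set \<Rightarrow> bool" where
  "closed_curve V E inc C \<longleftrightarrow> C \<subseteq> E \<and> (\<forall>v\<in>V. even (card {e\<in>C. inc v e}))"

definition darts :: "'v set \<Rightarrow> 'e set \<Rightarrow> ('v \<Rightarrow> 'e \<Rightarrow> bool) \<Rightarrow> ('v \<times> 'e) set" where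
  "darts V E inc = {(v, e). v \<in> V \<and> e \<in> E \<and> inc v e}"

definition dart_edges :: "'v set \<Rightarrow> 'e set \<Rightarrow> ('v \<Rightarrow> 'e \<Rightarrow> bool) \<Rightarrow> ('v \<times> 'e) set set" where
  "dart_edges V E inc = {{d1, d2} | d1 d2. d1 \<in> darts V E inc \<and> d2 \<in> darts V E inc \<and> d1 \<noteq> d2
      \<and> (fst d1 = fst d2 \<or> snd d1 = snd d2)}"

definition dart_edge_edges :: "'v set \<Rightarrow> 'e set \<Rightarrow> ('v \<Rightarrow> 'e \<Rightarrow> bool) \<Rightarrow> ('v \<times> 'e) set set" where
  "dart_edge_edges V E inc = {{d1, d2} | d1 d2. d1 \<in> darts V E inc \<and> d2 \<in> darts V E inc \<and> d1 \<noteq> d2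
      \<and> snd d1 = snd d2}"

text \<open>Identification of E^E_D with E: the dart-graph edge {(x,e),(y,e)} corresponds to e.\<close>
definition edge_of_dart_edge :: "('v \<times> 'e) set \<Rightarrow> 'e" where
  "edge_of_dart_edge m = snd (SOME d. d \<in> m)"

definition perfect_matching :: "'a set \<Rightarrow> 'a set set \<Rightarrow> 'a set set \<Rightarrow> bool" where
  "perfect_matching VV EE M \<longleftrightarrow> M \<subseteq> EE \<and> (\<forall>x\<in>VV. \<exists>!m. m \<in> M \<and> x \<in> m)"

end

theory Submission
  imports Defs
begin

text \<open>Every edge of type \<open>E\<^sup>E\<close> of the dart graph is the set of both darts of one edge of \<open>G\<close>,
  so \<open>(M\<^sub>1 \<triangle> M\<^sub>2) \<inter> E\<^sup>E\<close> corresponds to the edges \<open>e\<close> whose dart pair lies in exactly one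
  \<open>M\<^sub>i\<close>. At a vertex \<open>v\<close>, the darts \<open>(v,e)\<close> whose dart pair is not in \<open>M\<^sub>i\<close> are matched by
  \<open>M\<^sub>i\<close> to other darts at \<open>v\<close>, hence come in pairs. So the number of edges at \<open>v\<close> whose
  dart pair lies in \<open>M\<^sub>i\<close> has the parity of the degree of \<open>v\<close> for both \<open>i\<close>, and the
  symmetric difference of these two edge sets has even size.\<close>

definition darts_of_edge :: "'v set \<Rightarrow> 'e set \<Rightarrow> ('v \<Rightarrow> 'e \<Rightarrow> bool) \<Rightarrow> 'e \<Rightarrow> ('v \<times> 'e) set" where
  "darts_of_edge V E inc e = {d \<in> darts V E inc. snd d = e}"

lemma even_card_Union_disjoint_doubletons:
  assumes "pairwise disjnt F" and "\<And>m. m \<in> F \<Longrightarrow> card m = 2"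
  shows "even (card (\<Union>F))"
proof -
  have "card (\<Union>F) = sum card F"
    using assms by (intro card_Union_disjoint) (auto intro: card_ge_0_finite)
  also have "\<dots> = 2 * card F"
    using assms(2) by simp
  finally show ?thesis by simp
qed

lemma even_card_sym_diff_iff:
  assumes "finite A" and "finite B"
  shows "even (card ((A - B) \<union> (B - A))) \<longleftrightarrow> even (card A + card B)"
proof -
  have "card ((A - B) \<union> (B - A)) = card (A - B) + card (B - A)"
    using assms by (intro card_Un_disjoint) auto
  moreover have "card (A - B) = card A - card (A \<inter> B)" "card (B - A) = card B - card (A \<inter> B)"
    using assms by (simp_all add: card_Diff_subset_Int Int_commute)
  moreover have "card (A \<inter> B) \<le> card A" "card (A \<inter> B) \<le> card B"
    using assms by (simp_all add: card_mono)
  ultimately show ?thesis by presburger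
qed

lemma perfect_matching_unique:
  assumes "perfect_matching VV EE M" "x \<in> VV" "m \<in> M" "m' \<in> M" "x \<in> m" "x \<in> m'"
  shows "m = m'"
  using assms unfolding perfect_matching_def by blast

lemma dart_edges_subset_darts: "m \<in> dart_edges V E inc \<Longrightarrow> m \<subseteq> darts V E inc"
  by (auto simp: dart_edges_def)

lemma finite_graph_endpoints:
  assumes "finite_graph V E inc" and "e \<in> E"
  obtains x y where "x \<noteq> y" and "{w \<in> V. inc w e} = {x, y}"
  using assms by (auto simp: finite_graph_def card_2_iff)

lemma darts_of_edge_eq: "darts_of_edge V E inc e = (\<lambda>w. (w, e)) ` {w \<in> V. inc w e \<and> e \<in> E}"
  by (auto simp: darts_of_edge_def darts_def)

lemma dart_edge_edges_eq_image:
  assumes "finite_graph V E inc"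
  shows "dart_edge_edges V E inc = darts_of_edge V E inc ` E"
proof
  show "dart_edge_edges V E inc \<subseteq> darts_of_edge V E inc ` E"
  proof
    fix m assume "m \<in> dart_edge_edges V E inc"
    then obtain x y e where m: "m = {(x, e), (y, e)}" "x \<noteq> y" "e \<in> E"
      and xy: "x \<in> {w \<in> V. inc w e}" "y \<in> {w \<in> V. inc w e}"
      by (fastforce simp: dart_edge_edges_def darts_def)
    obtain a b where "a \<noteq> b" "{w \<in> V. inc w e} = {a, b}"
      using finite_graph_endpoints[OF assms \<open>e \<in> E\<close>] .
    with m(2) xy have "{w \<in> V. inc w e} = {x, y}" by auto
    with m show "m \<in> darts_of_edge V E inc ` E"
      by (auto simp: darts_of_edge_eq)
  qed
next
  show "darts_of_edge V E inc ` E \<subseteq> dart_edge_edges V E inc"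
  proof
    fix m assume "m \<in> darts_of_edge V E inc ` E"
    then obtain e where "e \<in> E" "m = darts_of_edge V E inc e" by blast
    moreover obtain x y where "x \<noteq> y" "{w \<in> V. inc w e} = {x, y}"
      using finite_graph_endpoints[OF assms \<open>e \<in> E\<close>] .
    ultimately have "m = {(x, e), (y, e)}" "(x, e) \<in> darts V E inc" "(y, e) \<in> darts V E inc"
      by (auto simp: darts_of_edge_eq darts_def)
    with \<open>x \<noteq> y\<close> show "m \<in> dart_edge_edges V E inc"
      unfolding dart_edge_edges_def by force
  qed
qed

lemma edge_of_darts_of_edge:
  assumes "finite_graph V E inc" and "e \<in> E"
  shows "edge_of_dart_edge (darts_of_edge V E inc e) = e"
proof -
  obtain x y where "{w \<in> V. inc w e} = {x, y}"
    using finite_graph_endpoints[OF assms] .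
  then have "(x, e) \<in> darts_of_edge V E inc e"
    using assms(2) by (auto simp: darts_of_edge_eq)
  then show ?thesis
    unfolding edge_of_dart_edge_def by (rule someI2) (simp add: darts_of_edge_def)
qed

lemma edge_of_dart_edge_image:
  assumes "finite_graph V E inc"
  shows "edge_of_dart_edge ` (N \<inter> dart_edge_edges V E inc) = {e \<in> E. darts_of_edge V E inc e \<in> N}"
  using edge_of_darts_of_edge[OF assms] unfolding dart_edge_edges_eq_image[OF assms]
  by force

lemma dart_edge_edges_eq_darts_of_edge:
  assumes "finite_graph V E inc" and "m \<in> dart_edge_edges V E inc" and "d \<in> m"
  shows "m = darts_of_edge V E inc (snd d)"
  using assms dart_edge_edges_eq_image[OF assms(1)] by (auto simp: darts_of_edge_def)

lemma dart_edges_same_vertex: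
  assumes "m \<in> dart_edges V E inc" and "m \<notin> dart_edge_edges V E inc" and "d \<in> m" and "d' \<in> m"
  shows "fst d' = fst d"
proof -
  obtain d1 d2 where m: "m = {d1, d2}" "d1 \<in> darts V E inc" "d2 \<in> darts V E inc" "d1 \<noteq> d2"
    and "fst d1 = fst d2 \<or> snd d1 = snd d2"
    using assms(1) unfolding dart_edges_def by blast
  moreover have "snd d1 \<noteq> snd d2"
    using assms(2) m unfolding dart_edge_edges_def by blast
  ultimately show ?thesis
    using assms(3,4) by auto
qed

lemma Pair_unmatched_edges_eq_Union_local_pairs:
  assumes fg: "finite_graph V E inc"
    and pm: "perfect_matching (darts V E inc) (dart_edges V E inc) M"
    and "v \<in> V"
  shows "Pair v ` {e \<in> E. inc v e \<and> darts_of_edge V E inc e \<notin> M} = \<Union>{m \<in> M. \<forall>d \<in> m. fst d = v}"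
proof (intro equalityI subsetI)
  have M_sub: "M \<subseteq> dart_edges V E inc"
    using pm by (simp add: perfect_matching_def)
  {
    fix d assume "d \<in> Pair v ` {e \<in> E. inc v e \<and> darts_of_edge V E inc e \<notin> M}"
    then obtain e where e: "d = (v, e)" "e \<in> E" "inc v e" "darts_of_edge V E inc e \<notin> M" by blast
    then have "d \<in> darts V E inc"
      using \<open>v \<in> V\<close> by (simp add: darts_def)
    then obtain m where m: "m \<in> M" "d \<in> m"
      using pm by (auto simp: perfect_matching_def)
    have "m \<notin> dart_edge_edges V E inc"
      using dart_edge_edges_eq_darts_of_edge[OF fg _ m(2)] e m(1) by auto
    then have "\<forall>d' \<in> m. fst d' = v"
      using dart_edges_same_vertex[OF _ _ m(2)] m(1) M_sub e(1) by fastforce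
    with m show "d \<in> \<Union>{m \<in> M. \<forall>d \<in> m. fst d = v}" by blast
  }
  fix d assume "d \<in> \<Union>{m \<in> M. \<forall>d \<in> m. fst d = v}"
  then obtain m where m: "m \<in> M" "d \<in> m" "\<forall>d' \<in> m. fst d' = v" by blast
  then obtain e where d: "d = (v, e)" "e \<in> E" "inc v e" "d \<in> darts V E inc"
    using M_sub dart_edges_subset_darts by (cases d) (fastforce simp: darts_def)
  obtain x y where xy: "x \<noteq> y" "{w \<in> V. inc w e} = {x, y}"
    using finite_graph_endpoints[OF fg \<open>e \<in> E\<close>] .
  have "darts_of_edge V E inc e \<notin> M"
  proof
    assume "darts_of_edge V E inc e \<in> M"
    moreover have "d \<in> darts_of_edge V E inc e"
      using d by (simp add: darts_of_edge_def)
    ultimately have "m = darts_of_edge V E inc e"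
      using perfect_matching_unique[OF pm d(4) m(1)] m(2) by blast
    then have "x = v" "y = v"
      using m(3) xy(2) d(2) by (auto simp: darts_of_edge_eq)
    with xy(1) show False by simp
  qed
  with d show "d \<in> Pair v ` {e \<in> E. inc v e \<and> darts_of_edge V E inc e \<notin> M}" by blast
qed

lemma even_card_edges_matched_iff_degree:
  assumes fg: "finite_graph V E inc"
    and pm: "perfect_matching (darts V E inc) (dart_edges V E inc) M"
    and "v \<in> V"
  shows "even (card {e \<in> E. inc v e \<and> darts_of_edge V E inc e \<in> M})
    \<longleftrightarrow> even (card {e \<in> E. inc v e})"
proof -
  let ?U = "{e \<in> E. inc v e \<and> darts_of_edge V E inc e \<notin> M}"
  have M_sub: "M \<subseteq> dart_edges V E inc"
    using pm by (simp add: perfect_matching_def)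
  have "even (card (\<Union>{m \<in> M. \<forall>d \<in> m. fst d = v}))"
  proof (rule even_card_Union_disjoint_doubletons)
    show "pairwise disjnt {m \<in> M. \<forall>d \<in> m. fst d = v}"
      unfolding pairwise_def disjnt_def
      using perfect_matching_unique[OF pm] M_sub dart_edges_subset_darts by blast
    show "card m = 2" if "m \<in> {m \<in> M. \<forall>d \<in> m. fst d = v}" for m
      using that M_sub by (auto simp: dart_edges_def)
  qed
  moreover have "card (Pair v ` ?U) = card ?U"
    by (rule card_image) (simp add: inj_on_def)
  ultimately have "even (card ?U)"
    using Pair_unmatched_edges_eq_Union_local_pairs[OF assms] by simp
  moreover have "card {e \<in> E. inc v e} = card {e \<in> E. inc v e \<and> darts_of_edge V E inc e \<in> M} + card ?U"
  proof -
    have "{e \<in> E. inc v e} = {e \<in> E. inc v e \<and> darts_of_edge V E inc e \<in> M} \<union> ?U"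
      by blast
    then show ?thesis
      using fg by (simp add: finite_graph_def card_Un_disjoint disjoint_iff)
  qed
  ultimately show ?thesis by simp
qed

theorem proposition2p5:
  fixes V :: "'v set" and E :: "'e set" and inc :: "'v \<Rightarrow> 'e \<Rightarrow> bool"
    and M1 M2 :: "('v \<times> 'e) set set"
  assumes "finite_graph V E inc"
    and "perfect_matching (darts V E inc) (dart_edges V E inc) M1"
    and "perfect_matching (darts V E inc) (dart_edges V E inc) M2"
  shows "closed_curve V E inc
           (edge_of_dart_edge ` (((M1 - M2) \<union> (M2 - M1)) \<inter> dart_edge_edges V E inc))"
proof -
  let ?A = "\<lambda>M v. {e \<in> E. inc v e \<and> darts_of_edge V E inc e \<in> M}"
  have curve: "edge_of_dart_edge ` (((M1 - M2) \<union> (M2 - M1)) \<inter> dart_edge_edges V E inc)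
      = {e \<in> E. darts_of_edge V E inc e \<in> (M1 - M2) \<union> (M2 - M1)}"
    using edge_of_dart_edge_image[OF assms(1)] .
  have "even (card {e \<in> E. darts_of_edge V E inc e \<in> (M1 - M2) \<union> (M2 - M1) \<and> inc v e})"
    if "v \<in> V" for v
  proof -
    have fin: "finite (?A M1 v)" "finite (?A M2 v)"
      using assms(1) by (simp_all add: finite_graph_def)
    have "{e \<in> E. darts_of_edge V E inc e \<in> (M1 - M2) \<union> (M2 - M1) \<and> inc v e}
        = (?A M1 v - ?A M2 v) \<union> (?A M2 v - ?A M1 v)"
      by blast
    moreover have "even (card (?A M1 v) + card (?A M2 v))"
      using even_card_edges_matched_iff_degree[OF assms(1) _ that] assms(2,3) by simp
    ultimately show ?thesis
      using even_card_sym_diff_iff[OF fin] by simp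
  qed
  then show ?thesis
    unfolding closed_curve_def curve by auto
qed

end
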